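(* Let $L$ be a finite extension of $\mathbb{Z}_\mathrm{max}$. Then $\mathrm{ui}(L/\mathbb{Z}_\mathrm{max})<\infty$.
   Context: A semifield is a commutative semiring (both operations commutative monoids, distributive law) in which every nonzero element is a unit. $\mathbb{Z}_\mathrm{max}=\mathbb{Z}\cup\{-\infty\}$ is the semifield with addition $\max$ and multiplication ordinary addition. An extension of a semifield $K$ is a semifield $L$ with an injective homomorphism $K\to L$; it is finite if $L$ is thereby a finitely generated $K$-semimodule. The unit index is $\mathrm{ui}(L/K)=|L^\times/K^\times|$, where $L^\times$ is the group of units of $L$ and $K^\times$ is identified with its image. *)

theory Defs
  imports Main
begin

definition semifield ::
  "'a set \<Rightarrow> ('a \<Rightarrow> 'a \<Rightarrow> 'a) \<Rightarrow> ('a \<Rightarrow> 'a \<Rightarrow> 'a) \<Rightarrow> 'a \<Rightarrow> 'a \<Rightarrow> bool" where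
  "semifield S add mul z u \<longleftrightarrow>
     z \<in> S \<and> u \<in> S \<and> z \<noteq> u \<and>
     (\<forall>x\<in>S. \<forall>y\<in>S. add x y \<in> S \<and> mul x y \<in> S) \<and>
     (\<forall>x\<in>S. \<forall>y\<in>S. \<forall>w\<in>S. add (add x y) w = add x (add y w)) \<and>
     (\<forall>x\<in>S. \<forall>y\<in>S. add x y = add y x) \<and>
     (\<forall>x\<in>S. add z x = x) \<and>
     (\<forall>x\<in>S. \<forall>y\<in>S. \<forall>w\<in>S. mul (mul x y) w = mul x (mul y w)) \<and>
     (\<forall>x\<in>S. \<forall>y\<in>S. mul x y = mul y x) \<and>
     (\<forall>x\<in>S. mul u x = x) \<and>
     (\<forall>x\<in>S. \<forall>y\<in>S. \<forall>w\<in>S. mul x (add y w) = add (mul x y) (mul x w)) \<and>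
     (\<forall>x\<in>S. mul z x = z) \<and>
     (\<forall>x\<in>S. x \<noteq> z \<longrightarrow> (\<exists>y\<in>S. mul x y = u))"

definition units_of_sf :: "'a set \<Rightarrow> ('a \<Rightarrow> 'a \<Rightarrow> 'a) \<Rightarrow> 'a \<Rightarrow> 'a set" where
  "units_of_sf S mul u = {x \<in> S. \<exists>y\<in>S. mul x y = u}"

text \<open>The semifield Z_max = Z with -infinity; -infinity is represented by None.\<close>

type_synonym zmax = "int option"

definition zmax_carrier :: "zmax set" where "zmax_carrier = UNIV"

fun zmax_add :: "zmax \<Rightarrow> zmax \<Rightarrow> zmax" where
  "zmax_add None y = y"
| "zmax_add x None = x"
| "zmax_add (Some a) (Some b) = Some (max a b)"

fun zmax_mul :: "zmax \<Rightarrow> zmax \<Rightarrow> zmax" where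
  "zmax_mul (Some a) (Some b) = Some (a + b)"
| "zmax_mul _ _ = None"

definition zmax_zero :: zmax where "zmax_zero = None"
definition zmax_one :: zmax where "zmax_one = Some 0"

definition sf_hom ::
  "'a set \<Rightarrow> ('a \<Rightarrow> 'a \<Rightarrow> 'a) \<Rightarrow> ('a \<Rightarrow> 'a \<Rightarrow> 'a) \<Rightarrow> 'a \<Rightarrow> 'a \<Rightarrow>
   'b set \<Rightarrow> ('b \<Rightarrow> 'b \<Rightarrow> 'b) \<Rightarrow> ('b \<Rightarrow> 'b \<Rightarrow> 'b) \<Rightarrow> 'b \<Rightarrow> 'b \<Rightarrow>
   ('a \<Rightarrow> 'b) \<Rightarrow> bool" where
  "sf_hom K addK mulK zK uK L addL mulL zL uL f \<longleftrightarrow>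
     (\<forall>x\<in>K. f x \<in> L) \<and>
     (\<forall>x\<in>K. \<forall>y\<in>K. f (addK x y) = addL (f x) (f y)) \<and>
     (\<forall>x\<in>K. \<forall>y\<in>K. f (mulK x y) = mulL (f x) (f y)) \<and>
     f zK = zL \<and> f uK = uL"

definition lin_comb ::
  "('b \<Rightarrow> 'b \<Rightarrow> 'b) \<Rightarrow> ('b \<Rightarrow> 'b \<Rightarrow> 'b) \<Rightarrow> 'b \<Rightarrow> ('a \<Rightarrow> 'b) \<Rightarrow> 'a list \<Rightarrow> 'b list \<Rightarrow> 'b" where
  "lin_comb addL mulL zL f cs gs =
     foldr (\<lambda>(c, g) acc. addL (mulL (f c) g) acc) (zip cs gs) zL"

definition fin_gen_semimodule ::
  "'a set \<Rightarrow> 'b set \<Rightarrow> ('b \<Rightarrow> 'b \<Rightarrow> 'b) \<Rightarrow> ('b \<Rightarrow> 'b \<Rightarrow> 'b) \<Rightarrow> 'b \<Rightarrow> ('a \<Rightarrow> 'b) \<Rightarrow> bool" where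
  "fin_gen_semimodule K L addL mulL zL f \<longleftrightarrow>
     (\<exists>gs. set gs \<subseteq> L \<and>
        (\<forall>x\<in>L. \<exists>cs. length cs = length gs \<and> set cs \<subseteq> K \<and>
                    x = lin_comb addL mulL zL f cs gs))"

text \<open>The unit index |L^x / K^x|: the set of cosets x K^x for x \<in> L^x.\<close>

definition unit_cosets ::
  "'a set \<Rightarrow> ('a \<Rightarrow> 'a \<Rightarrow> 'a) \<Rightarrow> 'a \<Rightarrow> 'b set \<Rightarrow> ('b \<Rightarrow> 'b \<Rightarrow> 'b) \<Rightarrow> 'b \<Rightarrow> ('a \<Rightarrow> 'b) \<Rightarrow> 'b set set" where
  "unit_cosets K mulK uK L mulL uL f =
     (\<lambda>x. (\<lambda>k. mulL x (f k)) ` units_of_sf K mulK uK) ` units_of_sf L mulL uL"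

end

theory Submission
  imports Defs
begin

(* Since 1 \<oplus> 1 = 1 in Z_max, L is idempotent and ordered by x \<preceq> y \<longleftrightarrow> x \<oplus> y = y,
   and the images t^k = f (Some k) of the integers are units of L.  Every y \<in> L lies below some t^k:
   for c = 1 \<oplus> y, two powers c^a, c^b with a < b have representations over the generators with the
   same zero pattern, so c^b \<preceq> t^K c^a, and cancelling gives c \<preceq> c^(b-a) \<preceq> t^K.  Hence any two
   nonzero generators satisfy g \<preceq> t^E g' for one fixed E.  In a representation x = \<Oplus> t^(k_i) g_i of a
   unit with largest exponent M, raising every exponent below M - E to M - E does not change x, so
   x = t^M \<Oplus> t^(d_i) g_i with all d_i in {-E..0} or -\<infinity>: there are finitely many cosets. *)

lemma units_zmax: "units_of_sf zmax_carrier zmax_mul zmax_one = range Some"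
proof (intro set_eqI iffI)
  fix c :: zmax assume "c \<in> range Some"
  then obtain k where "zmax_mul c (Some (- k)) = zmax_one" by (auto simp: zmax_one_def)
  then show "c \<in> units_of_sf zmax_carrier zmax_mul zmax_one"
    unfolding units_of_sf_def zmax_carrier_def by blast
next
  fix c assume "c \<in> units_of_sf zmax_carrier zmax_mul zmax_one"
  then show "c \<in> range Some" by (cases c) (auto simp: units_of_sf_def zmax_one_def)
qed

lemma exists_greatest_Some:
  fixes cs :: "'b::linorder option list"
  assumes "\<not> set cs \<subseteq> {None}"
  shows "\<exists>M. Some M \<in> set cs \<and> (\<forall>k. Some k \<in> set cs \<longrightarrow> k \<le> M)"
proof -
  have "Some -` set cs \<noteq> {}" using assms by auto
  moreover have "finite (Some -` set cs)" by (simp add: finite_vimageI)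
  ultimately show ?thesis by (intro exI[of _ "Max (Some -` set cs)"]) (auto dest: Max_in)
qed

locale zmax_semifield =
  fixes L :: "'a set"
    and add :: "'a \<Rightarrow> 'a \<Rightarrow> 'a" (infixl "\<oplus>" 65)
    and mul :: "'a \<Rightarrow> 'a \<Rightarrow> 'a" (infixl "\<otimes>" 70)
    and zero :: 'a ("\<zero>")
    and one :: 'a ("\<one>")
    and f :: "zmax \<Rightarrow> 'a"
  assumes semifield: "semifield L (\<oplus>) (\<otimes>) \<zero> \<one>"
    and hom: "sf_hom zmax_carrier zmax_add zmax_mul zmax_zero zmax_one L (\<oplus>) (\<otimes>) \<zero> \<one> f"
begin

lemma zero_closed: "\<zero> \<in> L" and one_closed: "\<one> \<in> L" and zero_neq_one: "\<zero> \<noteq> \<one>"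
  and add_closed: "\<And>x y. x \<in> L \<Longrightarrow> y \<in> L \<Longrightarrow> x \<oplus> y \<in> L"
  and mul_closed: "\<And>x y. x \<in> L \<Longrightarrow> y \<in> L \<Longrightarrow> x \<otimes> y \<in> L"
  and add_assoc: "\<And>x y w. x \<in> L \<Longrightarrow> y \<in> L \<Longrightarrow> w \<in> L \<Longrightarrow> x \<oplus> y \<oplus> w = x \<oplus> (y \<oplus> w)"
  and add_commute: "\<And>x y. x \<in> L \<Longrightarrow> y \<in> L \<Longrightarrow> x \<oplus> y = y \<oplus> x"
  and add_zero_left: "\<And>x. x \<in> L \<Longrightarrow> \<zero> \<oplus> x = x"
  and mul_assoc: "\<And>x y w. x \<in> L \<Longrightarrow> y \<in> L \<Longrightarrow> w \<in> L \<Longrightarrow> x \<otimes> y \<otimes> w = x \<otimes> (y \<otimes> w)"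
  and mul_commute: "\<And>x y. x \<in> L \<Longrightarrow> y \<in> L \<Longrightarrow> x \<otimes> y = y \<otimes> x"
  and mul_one_left: "\<And>x. x \<in> L \<Longrightarrow> \<one> \<otimes> x = x"
  and distrib_left: "\<And>x y w. x \<in> L \<Longrightarrow> y \<in> L \<Longrightarrow> w \<in> L \<Longrightarrow> x \<otimes> (y \<oplus> w) = x \<otimes> y \<oplus> x \<otimes> w"
  and mul_zero_left: "\<And>x. x \<in> L \<Longrightarrow> \<zero> \<otimes> x = \<zero>"
  and inverse_exists: "\<And>x. x \<in> L \<Longrightarrow> x \<noteq> \<zero> \<Longrightarrow> \<exists>y\<in>L. x \<otimes> y = \<one>"
  using semifield unfolding semifield_def by blast+

lemma mul_zero_right: "x \<in> L \<Longrightarrow> x \<otimes> \<zero> = \<zero>"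
  by (metis mul_commute mul_zero_left zero_closed)

lemma mul_one_right: "x \<in> L \<Longrightarrow> x \<otimes> \<one> = x"
  by (metis mul_commute mul_one_left one_closed)

lemma distrib_right: "x \<in> L \<Longrightarrow> y \<in> L \<Longrightarrow> w \<in> L \<Longrightarrow> (x \<oplus> y) \<otimes> w = x \<otimes> w \<oplus> y \<otimes> w"
  by (metis add_closed distrib_left mul_commute)

lemma f_closed: "f c \<in> L" and f_add: "f (zmax_add c d) = f c \<oplus> f d"
  and f_mul: "f (zmax_mul c d) = f c \<otimes> f d"
  and f_None: "f None = \<zero>" and f_Some_0: "f (Some 0) = \<one>"
  using hom unfolding sf_hom_def zmax_carrier_def zmax_zero_def zmax_one_def by auto

definition tpow :: "int \<Rightarrow> 'a" where "tpow k = f (Some k)"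

lemma tpow_closed: "tpow k \<in> L"
  by (simp add: tpow_def f_closed)

lemma tpow_add: "tpow (k + l) = tpow k \<otimes> tpow l"
  using f_mul[of "Some k" "Some l"] by (simp add: tpow_def)

lemma mul_neq_zero:
  assumes "x \<in> L" "y \<in> L" "x \<noteq> \<zero>" "y \<noteq> \<zero>" shows "x \<otimes> y \<noteq> \<zero>"
proof
  assume xy: "x \<otimes> y = \<zero>"
  obtain x' where x': "x' \<in> L" "x \<otimes> x' = \<one>" using inverse_exists assms by blast
  have "y = x' \<otimes> (x \<otimes> y)" by (metis assms(1,2) mul_assoc mul_commute mul_one_left x')
  then show False using xy mul_zero_right x'(1) assms(4) by simp
qed

lemma add_idem: "x \<in> L \<Longrightarrow> x \<oplus> x = x"
  using distrib_left[OF _ one_closed one_closed] f_add[of "Some 0" "Some 0"]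
  by (simp add: f_Some_0 mul_one_right)

definition leq :: "'a \<Rightarrow> 'a \<Rightarrow> bool" (infix "\<preceq>" 50) where "x \<preceq> y \<longleftrightarrow> x \<oplus> y = y"

lemma leq_refl: "x \<in> L \<Longrightarrow> x \<preceq> x"
  by (simp add: leq_def add_idem)

lemma leq_trans: "x \<in> L \<Longrightarrow> y \<in> L \<Longrightarrow> z \<in> L \<Longrightarrow> x \<preceq> y \<Longrightarrow> y \<preceq> z \<Longrightarrow> x \<preceq> z"
  unfolding leq_def by (metis add_assoc)

lemma leq_antisym: "x \<in> L \<Longrightarrow> y \<in> L \<Longrightarrow> x \<preceq> y \<Longrightarrow> y \<preceq> x \<Longrightarrow> x = y"
  unfolding leq_def by (metis add_commute)

lemma zero_leq: "x \<in> L \<Longrightarrow> \<zero> \<preceq> x"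
  by (simp add: leq_def add_zero_left)

lemma leq_add_left: "x \<in> L \<Longrightarrow> y \<in> L \<Longrightarrow> x \<preceq> x \<oplus> y"
  unfolding leq_def by (metis add_assoc add_idem)

lemma leq_add_right: "x \<in> L \<Longrightarrow> y \<in> L \<Longrightarrow> y \<preceq> x \<oplus> y"
  by (metis add_commute leq_add_left)

lemma add_leq: "x \<in> L \<Longrightarrow> y \<in> L \<Longrightarrow> z \<in> L \<Longrightarrow> x \<preceq> z \<Longrightarrow> y \<preceq> z \<Longrightarrow> x \<oplus> y \<preceq> z"
  unfolding leq_def by (metis add_assoc)

lemma mul_leq_mono: "m \<in> L \<Longrightarrow> x \<in> L \<Longrightarrow> y \<in> L \<Longrightarrow> x \<preceq> y \<Longrightarrow> m \<otimes> x \<preceq> m \<otimes> y"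
  unfolding leq_def by (metis distrib_left)

lemma mul_leq_cancel:
  assumes m: "m \<in> L" "m \<noteq> \<zero>" and x: "x \<in> L" and y: "y \<in> L" and le: "m \<otimes> x \<preceq> m \<otimes> y"
  shows "x \<preceq> y"
proof -
  obtain m' where m': "m' \<in> L" "m \<otimes> m' = \<one>" using inverse_exists m by blast
  have cancel: "m' \<otimes> (m \<otimes> w) = w" if "w \<in> L" for w
    by (metis m' m(1) mul_assoc mul_commute mul_one_left that)
  show ?thesis using mul_leq_mono[OF m'(1) _ _ le] cancel m(1) x y mul_closed by simp
qed

lemma tpow_max: "tpow (max k l) = tpow k \<oplus> tpow l"
  using f_add[of "Some k" "Some l"] by (simp add: tpow_def)

lemma tpow_mono: "k \<le> l \<Longrightarrow> tpow k \<preceq> tpow l"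
  by (simp add: leq_def tpow_max[symmetric] max_def)

definition lsum :: "('b \<Rightarrow> 'a) \<Rightarrow> 'b list \<Rightarrow> 'a" where
  "lsum a is = foldr (\<oplus>) (map a is) \<zero>"

lemma lsum_Nil [simp]: "lsum a [] = \<zero>" and lsum_Cons [simp]: "lsum a (i # is) = a i \<oplus> lsum a is"
  by (simp_all add: lsum_def)

lemma lsum_cong: "(\<And>i. i \<in> set is \<Longrightarrow> a i = b i) \<Longrightarrow> lsum a is = lsum b is"
  by (simp add: lsum_def cong: map_cong)

lemma lsum_closed: "(\<And>i. i \<in> set is \<Longrightarrow> a i \<in> L) \<Longrightarrow> lsum a is \<in> L"
  by (induction "is") (auto simp: zero_closed add_closed)

lemma lsum_upper: "(\<And>i. i \<in> set is \<Longrightarrow> a i \<in> L) \<Longrightarrow> i \<in> set is \<Longrightarrow> a i \<preceq> lsum a is"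
proof (induction "is")
  case (Cons j js)
  have "lsum a js \<in> L" "a j \<in> L" "a i \<in> L" using Cons.prems by (auto intro: lsum_closed)
  then show ?case
    using Cons leq_add_left leq_add_right leq_trans[OF _ _ add_closed] by auto
qed simp

lemma lsum_least:
  "(\<And>i. i \<in> set is \<Longrightarrow> a i \<in> L) \<Longrightarrow> x \<in> L \<Longrightarrow> (\<And>i. i \<in> set is \<Longrightarrow> a i \<preceq> x) \<Longrightarrow> lsum a is \<preceq> x"
  by (induction "is") (auto simp: zero_leq intro!: add_leq lsum_closed)

lemma lsum_mono:
  assumes "\<And>i. i \<in> set is \<Longrightarrow> a i \<in> L" "\<And>i. i \<in> set is \<Longrightarrow> b i \<in> L"
    and "\<And>i. i \<in> set is \<Longrightarrow> a i \<preceq> b i"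
  shows "lsum a is \<preceq> lsum b is"
proof (rule lsum_least)
  fix i assume "i \<in> set is"
  show "a i \<preceq> lsum b is"
  proof (rule leq_trans)
    show "a i \<preceq> b i" "b i \<preceq> lsum b is" using assms \<open>i \<in> set is\<close> by (auto intro: lsum_upper)
  qed (use assms \<open>i \<in> set is\<close> in \<open>auto intro: lsum_closed\<close>)
qed (use assms in \<open>auto intro: lsum_closed\<close>)

lemma lsum_absorb:
  assumes "\<And>i. i \<in> set is \<Longrightarrow> a i \<in> L" "\<And>i. i \<in> set is \<Longrightarrow> b i \<in> L"
    and "\<And>i. i \<in> set is \<Longrightarrow> a i \<preceq> b i" "\<And>i. i \<in> set is \<Longrightarrow> b i \<preceq> lsum a is"
  shows "lsum a is = lsum b is"
  using assms by (intro leq_antisym lsum_closed lsum_mono lsum_least) auto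

lemma mul_lsum: "m \<in> L \<Longrightarrow> (\<And>i. i \<in> set is \<Longrightarrow> a i \<in> L) \<Longrightarrow> m \<otimes> lsum a is = lsum (\<lambda>i. m \<otimes> a i) is"
  by (induction "is") (auto simp: mul_zero_right distrib_left lsum_closed)

lemma lin_comb_conv_lsum:
  "length cs = length gs \<Longrightarrow> lin_comb (\<oplus>) (\<otimes>) \<zero> f cs gs = lsum (\<lambda>i. f (cs ! i) \<otimes> gs ! i) [0..<length gs]"
proof -
  assume "length cs = length gs"
  then have "zip cs gs = map (\<lambda>i. (cs ! i, gs ! i)) [0..<length gs]"
    by (intro nth_equalityI) auto
  then show ?thesis unfolding lin_comb_def lsum_def by (simp add: foldr_map o_def)
qed

definition mpow :: "'a \<Rightarrow> nat \<Rightarrow> 'a" where "mpow c m = ((\<otimes>) c ^^ m) \<one>"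

lemma mpow_0 [simp]: "mpow c 0 = \<one>" and mpow_Suc [simp]: "mpow c (Suc m) = c \<otimes> mpow c m"
  by (simp_all add: mpow_def)

lemma mpow_closed: "c \<in> L \<Longrightarrow> mpow c m \<in> L"
  by (induction m) (simp_all add: one_closed mul_closed)

lemma mpow_neq_zero: "c \<in> L \<Longrightarrow> c \<noteq> \<zero> \<Longrightarrow> mpow c m \<noteq> \<zero>"
  by (induction m) (simp_all add: zero_neq_one[symmetric] mul_neq_zero mpow_closed)

lemma mpow_add: "c \<in> L \<Longrightarrow> mpow c (m + n) = mpow c m \<otimes> mpow c n"
  by (induction m) (simp_all add: mul_one_left mul_assoc mpow_closed)

lemma one_leq_mpow: "c \<in> L \<Longrightarrow> \<one> \<preceq> c \<Longrightarrow> \<one> \<preceq> mpow c m"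
proof (induction m)
  case (Suc m)
  then have "c \<otimes> \<one> \<preceq> c \<otimes> mpow c m"
    by (intro mul_leq_mono) (simp_all add: one_closed mpow_closed)
  then have "c \<preceq> mpow c (Suc m)"
    using Suc.prems by (simp add: mul_one_right)
  then show ?case
    using leq_trans[OF one_closed _ mpow_closed] Suc.prems by blast
qed (simp add: leq_refl one_closed)

lemma leq_mpow: "c \<in> L \<Longrightarrow> \<one> \<preceq> c \<Longrightarrow> 0 < d \<Longrightarrow> c \<preceq> mpow c d"
  using mul_leq_mono[OF _ one_closed mpow_closed one_leq_mpow, of c c "d - 1"]
  by (cases d) (simp_all add: mul_one_right)

lemma range_mul_tpow_shift: "z \<in> L \<Longrightarrow> range (\<lambda>k. (tpow M \<otimes> z) \<otimes> tpow k) = range (\<lambda>k. z \<otimes> tpow k)"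
proof -
  assume z: "z \<in> L"
  have "(tpow M \<otimes> z) \<otimes> tpow k = z \<otimes> tpow (M + k)" for k
    by (metis mul_assoc mul_commute tpow_add tpow_closed z)
  then have "range (\<lambda>k. (tpow M \<otimes> z) \<otimes> tpow k) = (\<lambda>k. z \<otimes> tpow k) ` range ((+) M)"
    by (simp only: image_image)
  also have "range ((+) M) = UNIV"
    by simp
  finally show ?thesis .
qed

lemma unit_cosets_conv_range:
  "unit_cosets zmax_carrier zmax_mul zmax_one L (\<otimes>) \<one> f
     = (\<lambda>x. range (\<lambda>k. x \<otimes> tpow k)) ` units_of_sf L (\<otimes>) \<one>"
  unfolding unit_cosets_def units_zmax tpow_def by (simp add: image_image)

end

locale finite_zmax_extension = zmax_semifield +
  fixes gs :: "'a list"
  assumes gens_closed: "set gs \<subseteq> L"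
    and gens_span: "\<forall>x\<in>L. \<exists>cs. length cs = length gs \<and> x = lin_comb (\<oplus>) (\<otimes>) \<zero> f cs gs"
begin

abbreviation comb :: "zmax list \<Rightarrow> 'a" where "comb cs \<equiv> lin_comb (\<oplus>) (\<otimes>) \<zero> f cs gs"

lemma gen_closed: "i < length gs \<Longrightarrow> gs ! i \<in> L"
  using gens_closed nth_mem by blast

lemma comb_closed: "length cs = length gs \<Longrightarrow> comb cs \<in> L"
  by (auto simp: lin_comb_conv_lsum intro!: lsum_closed mul_closed f_closed gen_closed)

lemma comb_leq_tpow_mul:
  assumes cs: "length cs = length gs" and ds: "length ds = length gs"
    and same_zeros: "\<forall>i<length gs. cs ! i = None \<longleftrightarrow> ds ! i = None"
  shows "\<exists>K. comb cs \<preceq> tpow K \<otimes> comb ds"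
proof -
  define n where "n = length gs"
  define K where "K = Max ((\<lambda>i. the (cs ! i) - the (ds ! i)) ` {..<n})"
  have term_leq: "f (cs ! i) \<otimes> gs ! i \<preceq> tpow K \<otimes> (f (ds ! i) \<otimes> gs ! i)" if i: "i < n" for i
  proof (cases "cs ! i")
    case None
    then show ?thesis using zero_leq mul_closed tpow_closed f_closed gen_closed i n_def f_None mul_zero_left by simp
  next
    case (Some a)
    then obtain b where b: "ds ! i = Some b" using same_zeros i n_def by fastforce
    have "a - b \<le> K" unfolding K_def using i Some b by (intro Max_ge) force+
    then have "gs ! i \<otimes> tpow a \<preceq> gs ! i \<otimes> tpow (K + b)"
      using i n_def by (intro mul_leq_mono tpow_mono) (simp_all add: gen_closed tpow_closed)
    then show ?thesis
      using i n_def
      by (simp add: Some b tpow_def[symmetric] mul_commute[OF gen_closed tpow_closed] tpow_closed gen_closed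
          flip: mul_assoc tpow_add)
  qed
  have "comb cs \<preceq> lsum (\<lambda>i. tpow K \<otimes> (f (ds ! i) \<otimes> gs ! i)) [0..<n]"
    unfolding lin_comb_conv_lsum[OF cs] n_def
    by (rule lsum_mono) (simp_all add: term_leq[unfolded n_def] mul_closed tpow_closed f_closed gen_closed)
  also have "lsum (\<lambda>i. tpow K \<otimes> (f (ds ! i) \<otimes> gs ! i)) [0..<n] = tpow K \<otimes> comb ds"
    unfolding lin_comb_conv_lsum[OF ds] n_def
    by (rule mul_lsum[symmetric]) (simp_all add: tpow_closed mul_closed f_closed gen_closed)
  finally show ?thesis by blast
qed

lemma mpow_leq_tpow:
  assumes c: "c \<in> L" "c \<noteq> \<zero>"
  shows "\<exists>d>0. \<exists>K. mpow c d \<preceq> tpow K"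
proof -
  have "\<forall>m. \<exists>cs. length cs = length gs \<and> mpow c m = comb cs"
    using gens_span mpow_closed[OF c(1)] by blast
  then obtain rep where rep: "\<And>m. length (rep m) = length gs \<and> mpow c m = comb (rep m)"
    by metis
  define zeros where "zeros m = map (\<lambda>a. a = None) (rep m)" for m
  have "range zeros \<subseteq> {bs. set bs \<subseteq> UNIV \<and> length bs = length gs}"
    using rep by (auto simp: zeros_def)
  then have "finite (range zeros)"
    using finite_subset finite_lists_length_eq[OF finite_UNIV] by blast
  then have "\<not> inj zeros"
    using finite_imageD infinite_UNIV_nat by blast
  then obtain a b where ab: "a < b" "zeros a = zeros b"
    unfolding inj_def by (metis linorder_neqE_nat)
  have zeros_nth: "zeros m ! i \<longleftrightarrow> rep m ! i = None" if "i < length gs" for m i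
    using that rep[of m] by (simp add: zeros_def)
  have "\<forall>i<length gs. rep b ! i = None \<longleftrightarrow> rep a ! i = None"
    using zeros_nth ab(2) by metis
  then obtain K where "comb (rep b) \<preceq> tpow K \<otimes> comb (rep a)"
    using comb_leq_tpow_mul rep by blast
  then have "mpow c a \<otimes> mpow c (b - a) \<preceq> tpow K \<otimes> mpow c a"
    using rep[of a] rep[of b] mpow_add[OF c(1), of a "b - a"] ab(1) by simp
  then have "mpow c a \<otimes> mpow c (b - a) \<preceq> mpow c a \<otimes> tpow K"
    by (simp only: mul_commute[OF tpow_closed mpow_closed[OF c(1)]])
  then have "mpow c (b - a) \<preceq> tpow K"
    by (rule mul_leq_cancel[OF mpow_closed[OF c(1)] mpow_neq_zero[OF c] mpow_closed[OF c(1)] tpow_closed])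
  moreover have "0 < b - a" using ab(1) by simp
  ultimately show ?thesis by blast
qed

lemma leq_tpow:
  assumes y: "y \<in> L" shows "\<exists>k. y \<preceq> tpow k"
proof -
  define c where "c = \<one> \<oplus> y"
  have c_closed: "c \<in> L" and one_leq_c: "\<one> \<preceq> c" and y_leq_c: "y \<preceq> c"
    unfolding c_def using y by (simp_all add: add_closed one_closed leq_add_left leq_add_right)
  have "c \<noteq> \<zero>"
  proof
    assume "c = \<zero>"
    then have "\<one> = \<zero>"
      using one_leq_c leq_antisym[OF one_closed zero_closed _ zero_leq[OF one_closed]] by simp
    then show False using zero_neq_one by simp
  qed
  then obtain d K where d: "0 < d" and "mpow c d \<preceq> tpow K"
    using mpow_leq_tpow c_closed by blast
  then have "c \<preceq> tpow K"
    using leq_mpow[OF c_closed one_leq_c d] leq_trans[OF c_closed mpow_closed tpow_closed] c_closed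
    by blast
  then show ?thesis
    using y_leq_c leq_trans[OF y c_closed tpow_closed] by blast
qed

lemma eventually_leq_tpow_mul:
  assumes a: "a \<in> L" "a \<noteq> \<zero>" and b: "b \<in> L"
  shows "\<forall>\<^sub>F k in at_top. b \<preceq> tpow k \<otimes> a"
proof -
  obtain a' where a': "a' \<in> L" "a \<otimes> a' = \<one>" using inverse_exists a by blast
  have ba': "b \<otimes> a' \<in> L" using b a' mul_closed by simp
  obtain k where k: "b \<otimes> a' \<preceq> tpow k" using leq_tpow ba' by blast
  have b_eq: "b = (b \<otimes> a') \<otimes> a"
    by (metis a'(1) a'(2) a(1) b mul_assoc mul_commute mul_one_right)
  have "b \<preceq> tpow l \<otimes> a" if "k \<le> l" for l
  proof -
    have "b \<otimes> a' \<preceq> tpow l"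
      using k tpow_mono[OF that] leq_trans[OF ba' tpow_closed tpow_closed] by blast
    then have "a \<otimes> (b \<otimes> a') \<preceq> a \<otimes> tpow l"
      using mul_leq_mono a(1) ba' tpow_closed by blast
    then show ?thesis
      using b_eq by (simp add: mul_commute a(1) ba' tpow_closed)
  qed
  then show ?thesis by (auto simp: eventually_at_top_linorder)
qed

lemma gens_comparable:
  "\<exists>E\<ge>0. \<forall>a\<in>set gs. \<forall>b\<in>set gs. a \<noteq> \<zero> \<longrightarrow> b \<preceq> tpow E \<otimes> a"
proof -
  have "\<forall>\<^sub>F k in at_top. \<forall>(a, b)\<in>set gs \<times> set gs. a \<noteq> \<zero> \<longrightarrow> b \<preceq> tpow k \<otimes> a"
    using gens_closed
    by (intro eventually_ball_finite) (auto intro!: eventually_leq_tpow_mul simp: eventually_True)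
  moreover have "\<forall>\<^sub>F k in at_top. (0::int) \<le> k" by (rule eventually_ge_at_top)
  ultimately have "\<forall>\<^sub>F k in at_top. 0 \<le> k \<and> (\<forall>(a, b)\<in>set gs \<times> set gs. a \<noteq> \<zero> \<longrightarrow> b \<preceq> tpow k \<otimes> a)"
    by (rule eventually_conj[rotated])
  then show ?thesis
    unfolding eventually_at_top_linorder by blast
qed

lemma comb_cong:
  assumes "length cs = length gs" "length ds = length gs"
    and "\<And>i. i < length gs \<Longrightarrow> f (cs ! i) \<otimes> gs ! i = f (ds ! i) \<otimes> gs ! i"
  shows "comb cs = comb ds"
  unfolding lin_comb_conv_lsum[OF assms(1)] lin_comb_conv_lsum[OF assms(2)]
  using assms(3) by (intro lsum_cong) simp

lemma tpow_mul_comb: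
  assumes ds: "length ds = length gs"
  shows "tpow M \<otimes> comb ds = comb (map (map_option ((+) M)) ds)"
proof -
  have f_shift: "f (map_option ((+) M) c) = tpow M \<otimes> f c" for c
    by (cases c) (simp_all add: tpow_def f_None mul_zero_right f_closed flip: f_mul)
  have "tpow M \<otimes> comb ds = lsum (\<lambda>i. tpow M \<otimes> (f (ds ! i) \<otimes> gs ! i)) [0..<length gs]"
    unfolding lin_comb_conv_lsum[OF ds]
    by (rule mul_lsum) (simp_all add: tpow_closed mul_closed f_closed gen_closed)
  also have "\<dots> = lsum (\<lambda>i. f (map (map_option ((+) M)) ds ! i) \<otimes> gs ! i) [0..<length gs]"
    using ds by (intro lsum_cong) (simp add: f_shift mul_assoc tpow_closed f_closed gen_closed)
  also have "\<dots> = comb (map (map_option ((+) M)) ds)"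
    using ds by (simp add: lin_comb_conv_lsum)
  finally show ?thesis .
qed

lemma comb_drop_zero_gens:
  assumes "length cs = length gs"
  shows "comb cs = comb (map (\<lambda>i. if gs ! i = \<zero> then None else cs ! i) [0..<length gs])"
  using assms
  by (intro comb_cong) (simp_all add: f_None mul_zero_left mul_zero_right f_closed gen_closed zero_closed)

lemma gen_leq_tpow_shift:
  assumes E: "\<forall>a\<in>set gs. \<forall>b\<in>set gs. a \<noteq> \<zero> \<longrightarrow> b \<preceq> tpow E \<otimes> a"
    and "i < length gs" "j < length gs" "gs ! j \<noteq> \<zero>"
  shows "tpow (M - E) \<otimes> gs ! i \<preceq> tpow M \<otimes> gs ! j"
proof -
  have "gs ! i \<preceq> tpow E \<otimes> gs ! j"
    using E assms(2-4) by (metis nth_mem)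
  then have "tpow (M - E) \<otimes> gs ! i \<preceq> tpow (M - E) \<otimes> (tpow E \<otimes> gs ! j)"
    using assms(2,3) by (intro mul_leq_mono) (simp_all add: tpow_closed gen_closed mul_closed)
  also have "tpow (M - E) \<otimes> (tpow E \<otimes> gs ! j) = tpow M \<otimes> gs ! j"
    using assms(3) by (simp add: tpow_closed gen_closed flip: mul_assoc tpow_add)
  finally show ?thesis .
qed

lemma comb_raise_exponents:
  assumes E: "\<forall>a\<in>set gs. \<forall>b\<in>set gs. a \<noteq> \<zero> \<longrightarrow> b \<preceq> tpow E \<otimes> a"
    and cs: "length cs = length gs"
    and i0: "i0 < length gs" "cs ! i0 = Some M" "gs ! i0 \<noteq> \<zero>"
  shows "comb cs = comb (map (map_option (max (M - E))) cs)"
proof -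
  define t where "t i = f (cs ! i) \<otimes> gs ! i" for i
  define t' where "t' i = f (map_option (max (M - E)) (cs ! i)) \<otimes> gs ! i" for i
  have t_closed: "t i \<in> L" and t'_closed: "t' i \<in> L" if "i < length gs" for i
    using that by (simp_all add: t_def t'_def mul_closed f_closed gen_closed)
  have comb_cs: "comb cs = lsum t [0..<length gs]"
    unfolding lin_comb_conv_lsum[OF cs] by (intro lsum_cong) (simp add: t_def)
  have t_leq_comb: "t i \<preceq> comb cs" if "i < length gs" for i
    unfolding comb_cs using that t_closed by (intro lsum_upper) auto
  have dominated: "tpow (M - E) \<otimes> gs ! i \<preceq> comb cs" if i: "i < length gs" for i
  proof (rule leq_trans)
    show "tpow (M - E) \<otimes> gs ! i \<preceq> t i0"
      using gen_leq_tpow_shift[OF E i i0(1,3)] i0(2) by (simp add: t_def tpow_def)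
  qed (use i i0 t_closed t_leq_comb comb_closed[OF cs] in \<open>simp_all add: mul_closed tpow_closed gen_closed\<close>)
  have "t i \<preceq> t' i \<and> t' i \<preceq> comb cs" if i: "i < length gs" for i
  proof (cases "cs ! i")
    case None
    then have "t' i = t i" by (simp add: t_def t'_def)
    then show ?thesis using t_leq_comb[OF i] leq_refl[OF t_closed[OF i]] by simp
  next
    case (Some k)
    have d: "tpow (M - E) \<otimes> gs ! i \<in> L" using i by (simp add: mul_closed tpow_closed gen_closed)
    have "t' i = t i \<oplus> tpow (M - E) \<otimes> gs ! i"
      using i Some by (simp add: t_def t'_def tpow_def[symmetric] max.commute tpow_max distrib_right
          tpow_closed gen_closed)
    then show ?thesis
      using leq_add_left[OF t_closed[OF i] d] add_leq[OF t_closed[OF i] d comb_closed[OF cs]]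
        t_leq_comb[OF i] dominated[OF i] by simp
  qed
  then have "comb cs = lsum t' [0..<length gs]"
    unfolding comb_cs using t_closed t'_closed by (intro lsum_absorb) (auto simp: comb_cs)
  also have "lsum t' [0..<length gs] = comb (map (map_option (max (M - E))) cs)"
  proof -
    have raised_length: "length (map (map_option (max (M - E))) cs) = length gs" using cs by simp
    show ?thesis
      unfolding lin_comb_conv_lsum[OF raised_length] using cs by (intro lsum_cong) (simp add: t'_def)
  qed
  finally show ?thesis .
qed

lemma comb_all_None:
  assumes cs: "length cs = length gs" and "set cs \<subseteq> {None}"
  shows "comb cs = \<zero>"
proof -
  have "cs ! i = None" if "i < length gs" for i
  proof -
    have "cs ! i \<in> set cs" using that cs by simp
    then show ?thesis using assms(2) by blast
  qed
  then have "comb cs \<preceq> \<zero>"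
    unfolding lin_comb_conv_lsum[OF cs]
    by (intro lsum_least) (simp_all add: f_None mul_zero_left gen_closed zero_closed leq_refl)
  then show ?thesis
    using leq_antisym[OF comb_closed[OF cs] zero_closed _ zero_leq[OF comb_closed[OF cs]]] by simp
qed

lemma nonzero_eq_tpow_mul_comb:
  assumes E: "0 \<le> E" "\<forall>a\<in>set gs. \<forall>b\<in>set gs. a \<noteq> \<zero> \<longrightarrow> b \<preceq> tpow E \<otimes> a"
    and x: "x \<in> L" "x \<noteq> \<zero>"
  shows "\<exists>ds M. length ds = length gs \<and> set ds \<subseteq> insert None (Some ` {-E..0})
                \<and> x = tpow M \<otimes> comb ds"
proof -
  obtain cs' where cs': "length cs' = length gs" "x = comb cs'" using gens_span x(1) by blast
  define cs where "cs = map (\<lambda>i. if gs ! i = \<zero> then None else cs' ! i) [0..<length gs]"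
  have cs: "length cs = length gs" "x = comb cs"
    using trans[OF cs'(2) comb_drop_zero_gens[OF cs'(1)]] by (simp_all add: cs_def)
  have "\<not> set cs \<subseteq> {None}" using comb_all_None cs x(2) by blast
  then obtain M where M: "Some M \<in> set cs" and M_max: "\<And>k. Some k \<in> set cs \<Longrightarrow> k \<le> M"
    using exists_greatest_Some by blast
  then obtain i0 where i0: "i0 < length gs" "cs ! i0 = Some M"
    by (auto simp: in_set_conv_nth cs(1))
  then have "gs ! i0 \<noteq> \<zero>" by (simp add: cs_def split: if_splits)
  define ds where "ds = map (map_option (\<lambda>k. max (M - E) k - M)) cs"
  have ds_length: "length ds = length gs" by (simp add: ds_def cs(1))
  have "x = comb (map (map_option (max (M - E))) cs)"
    using comb_raise_exponents[OF E(2) cs(1) i0 \<open>gs ! i0 \<noteq> \<zero>\<close>] cs(2) by simp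
  also have "map (map_option (max (M - E))) cs = map (map_option ((+) M)) ds"
    by (simp add: ds_def option.map_comp comp_def)
  also have "comb (map (map_option ((+) M)) ds) = tpow M \<otimes> comb ds"
    by (rule tpow_mul_comb[OF ds_length, symmetric])
  finally have "x = tpow M \<otimes> comb ds" .
  moreover have "d \<in> insert None (Some ` {-E..0})"
    if "d \<in> map_option (\<lambda>k. max (M - E) k - M) ` set cs" for d
    using that M_max E(1) by (cases d) force+
  then have "set ds \<subseteq> insert None (Some ` {-E..0})" unfolding ds_def by auto
  ultimately show ?thesis using ds_length by blast
qed

lemma finite_unit_cosets: "finite (unit_cosets zmax_carrier zmax_mul zmax_one L (\<otimes>) \<one> f)"
proof -
  obtain E where E: "0 \<le> E" "\<forall>a\<in>set gs. \<forall>b\<in>set gs. a \<noteq> \<zero> \<longrightarrow> b \<preceq> tpow E \<otimes> a"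
    using gens_comparable by blast
  define D where "D = {ds. set ds \<subseteq> insert None (Some ` {-E..0}) \<and> length ds = length gs}"
  have "finite D" unfolding D_def by (rule finite_lists_length_eq) simp
  moreover have "range (\<lambda>k. x \<otimes> tpow k) \<in> (\<lambda>ds. range (\<lambda>k. comb ds \<otimes> tpow k)) ` D"
    if "x \<in> units_of_sf L (\<otimes>) \<one>" for x
  proof -
    have x: "x \<in> L" "x \<noteq> \<zero>"
      using that mul_zero_left zero_neq_one unfolding units_of_sf_def by auto
    then obtain ds M where "length ds = length gs" "set ds \<subseteq> insert None (Some ` {-E..0})"
      and "x = tpow M \<otimes> comb ds"
      using nonzero_eq_tpow_mul_comb[OF E] by blast
    then show ?thesis
      using range_mul_tpow_shift[OF comb_closed] D_def by auto
  qed
  ultimately show ?thesis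
    unfolding unit_cosets_conv_range by (meson finite_surj image_subsetI)
qed

end

theorem mainTheorem3:
  fixes L :: "'a set" and addL mulL :: "'a \<Rightarrow> 'a \<Rightarrow> 'a" and zL uL :: 'a
    and f :: "zmax \<Rightarrow> 'a"
  assumes "semifield L addL mulL zL uL"
    and "sf_hom zmax_carrier zmax_add zmax_mul zmax_zero zmax_one L addL mulL zL uL f"
    and "inj_on f zmax_carrier"
    and "fin_gen_semimodule zmax_carrier L addL mulL zL f"
  shows "finite (unit_cosets zmax_carrier zmax_mul zmax_one L mulL uL f)"
proof -
  obtain gs where "set gs \<subseteq> L"
    and "\<forall>x\<in>L. \<exists>cs. length cs = length gs \<and> x = lin_comb addL mulL zL f cs gs"
    using assms(4) unfolding fin_gen_semimodule_def by blast
  then interpret finite_zmax_extension L addL mulL zL uL f gs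
    using assms(1,2) by unfold_locales
  show ?thesis by (rule finite_unit_cosets)
qed

end
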